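(* For every MSyDS $\mathcal{S}$ with node set $V$ there is a single-layer SyDS with node set $V$ whose phase space is identical to the phase space of $\mathcal{S}$.
   Context: A multilayer synchronous dynamical system (MSyDS) $\mathcal{S}$ over $\mathbb{B}=\{0,1\}$ with $k\ge 1$ layers consists of: a finite node set $V$; undirected simple graphs $G_i=(V,E_i)$, $1\le i\le k$ (all layers share the node set $V$); for each layer $i$ and node $v$ a local function $f_{i,v}$ (an arbitrary Boolean function) with output in $\mathbb{B}$ whose inputs are the states of the nodes in the closed neighborhood of $v$ in $G_i$ ($v$ and its neighbors in $G_i$); and for each node $v$ a master function $\psi_v:\mathbb{B}^k\to\mathbb{B}$. A configuration is a map $\mathcal{C}:V\to\mathbb{B}$; its successor is $\mathcal{C}'$ with $\mathcal{C}'(v)=\psi_v(f_{1,v}(\mathcal{C}),\dots,f_{k,v}(\mathcal{C}))$ for all $v$ (synchronous update), where $f_{i,v}(\mathcal{C})$ is $f_{i,v}$ evaluated on the states in $\mathcal{C}$ of the closed neighborhood of $v$ in $G_i$. The phase space is the directed graph on all configurations with an arc from each configuration to its successor. A single-layer synchronous dynamical system (SyDS) over $\mathbb{B}$ consists of one undirected graph $G=(V,E)$ and, for each $v\in V$, a Boolean local function $f_v$ of the states of the closed neighborhood of $v$ in $G$; the successor of $\mathcal{C}$ is $\mathcal{C}'$ with $\mathcal{C}'(v)=f_v(\mathcal{C})$ for all $v$, and its phase space is defined in the same way. *)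

theory Defs
  imports Main
begin

(* Node set: the finite type 'v (V = UNIV).  Configurations: 'v \<Rightarrow> bool.
   A graph is a relation E :: 'v \<Rightarrow> 'v \<Rightarrow> bool. *)

definition simple_graph :: "('v \<Rightarrow> 'v \<Rightarrow> bool) \<Rightarrow> bool" where
  "simple_graph E \<longleftrightarrow> (\<forall>u v. E u v = E v u) \<and> (\<forall>v. \<not> E v v)"

definition closed_nbhd :: "('v \<Rightarrow> 'v \<Rightarrow> bool) \<Rightarrow> 'v \<Rightarrow> 'v set" where
  "closed_nbhd E v = {u. u = v \<or> E v u}"

definition local_fun :: "('v \<Rightarrow> 'v \<Rightarrow> bool) \<Rightarrow> 'v \<Rightarrow> (('v \<Rightarrow> bool) \<Rightarrow> bool) \<Rightarrow> bool" where
  "local_fun E v g \<longleftrightarrow>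
     (\<forall>C C'. (\<forall>u\<in>closed_nbhd E v. C u = C' u) \<longrightarrow> g C = g C')"

(* MSyDS with k layers indexed 0..<k: graphs E i, local functions f i v,
   master functions \<psi> v : B^k \<rightarrow> B (arguments as a bool list of length k). *)
definition is_msyds ::
  "nat \<Rightarrow> (nat \<Rightarrow> 'v \<Rightarrow> 'v \<Rightarrow> bool) \<Rightarrow> (nat \<Rightarrow> 'v \<Rightarrow> ('v \<Rightarrow> bool) \<Rightarrow> bool) \<Rightarrow> bool" where
  "is_msyds k E f \<longleftrightarrow> k \<ge> 1 \<and>
     (\<forall>i<k. simple_graph (E i) \<and> (\<forall>v. local_fun (E i) v (f i v)))"

definition msyds_step ::
  "nat \<Rightarrow> (nat \<Rightarrow> 'v \<Rightarrow> ('v \<Rightarrow> bool) \<Rightarrow> bool) \<Rightarrow> ('v \<Rightarrow> bool list \<Rightarrow> bool)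
   \<Rightarrow> ('v \<Rightarrow> bool) \<Rightarrow> ('v \<Rightarrow> bool)" where
  "msyds_step k f \<psi> C = (\<lambda>v. \<psi> v (map (\<lambda>i. f i v C) [0..<k]))"

definition is_syds :: "('v \<Rightarrow> 'v \<Rightarrow> bool) \<Rightarrow> ('v \<Rightarrow> ('v \<Rightarrow> bool) \<Rightarrow> bool) \<Rightarrow> bool" where
  "is_syds G g \<longleftrightarrow> simple_graph G \<and> (\<forall>v. local_fun G v (g v))"

definition syds_step :: "('v \<Rightarrow> ('v \<Rightarrow> bool) \<Rightarrow> bool) \<Rightarrow> ('v \<Rightarrow> bool) \<Rightarrow> ('v \<Rightarrow> bool)" where
  "syds_step g C = (\<lambda>v. g v C)"

definition phase_space :: "(('v \<Rightarrow> bool) \<Rightarrow> ('v \<Rightarrow> bool)) \<Rightarrow> (('v \<Rightarrow> bool) \<times> ('v \<Rightarrow> bool)) set" where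
  "phase_space step = {(C, step C) | C. True}"

end

theory Submission
  imports Defs
begin

(* Take the union of the layer graphs as the single graph and the composite
   \<psi>_v(f_{1,v}, ..., f_{k,v}) as the local function at v.  The union of simple graphs
   is simple, every layer neighbourhood lies inside the union neighbourhood, so the
   composite is local there; the successor maps, hence the phase spaces, coincide. *)

definition union_graph :: "nat \<Rightarrow> (nat \<Rightarrow> 'v \<Rightarrow> 'v \<Rightarrow> bool) \<Rightarrow> 'v \<Rightarrow> 'v \<Rightarrow> bool" where
  "union_graph k E = (\<lambda>u w. \<exists>i<k. E i u w)"

lemma simple_graph_union_graph:
  assumes "\<And>i. i < k \<Longrightarrow> simple_graph (E i)"
  shows "simple_graph (union_graph k E)"
  using assms unfolding simple_graph_def union_graph_def by metis

lemma closed_nbhd_subset_union_graph: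
  assumes "i < k"
  shows "closed_nbhd (E i) v \<subseteq> closed_nbhd (union_graph k E) v"
  using assms unfolding closed_nbhd_def union_graph_def by blast

lemma local_fun_mono:
  assumes "local_fun E v g" and "closed_nbhd E v \<subseteq> closed_nbhd G v"
  shows "local_fun G v g"
  using assms unfolding local_fun_def by blast

lemma local_fun_comp_list:
  assumes "\<And>i. i < k \<Longrightarrow> local_fun G v (g i)"
  shows "local_fun G v (\<lambda>C. h (map (\<lambda>i. g i C) [0..<k]))"
  unfolding local_fun_def
proof (intro allI impI)
  fix C C' :: "'a \<Rightarrow> bool"
  assume agree: "\<forall>u\<in>closed_nbhd G v. C u = C' u"
  have "g i C = g i C'" if "i < k" for i
    using assms[OF that] agree unfolding local_fun_def by blast
  then show "h (map (\<lambda>i. g i C) [0..<k]) = h (map (\<lambda>i. g i C') [0..<k])"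
    by (intro arg_cong[where f = h] map_cong) auto
qed

lemma is_syds_union_graph_msyds_step:
  assumes "is_msyds k E f"
  shows "is_syds (union_graph k E) (\<lambda>v C. msyds_step k f \<psi> C v)"
  unfolding is_syds_def
proof (intro conjI allI)
  show "simple_graph (union_graph k E)"
    using assms by (intro simple_graph_union_graph) (simp add: is_msyds_def)
next
  fix v
  have "local_fun (union_graph k E) v (f i v)" if "i < k" for i
  proof (rule local_fun_mono)
    show "local_fun (E i) v (f i v)"
      using assms that by (simp add: is_msyds_def)
    show "closed_nbhd (E i) v \<subseteq> closed_nbhd (union_graph k E) v"
      using that by (rule closed_nbhd_subset_union_graph)
  qed
  then show "local_fun (union_graph k E) v (\<lambda>C. msyds_step k f \<psi> C v)"
    unfolding msyds_step_def by (rule local_fun_comp_list)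
qed

lemma syds_step_of_step: "syds_step (\<lambda>v C. F C v) = F"
  unfolding syds_step_def by (rule ext) (rule refl)

theorem proposition6p1:
  fixes k :: nat
    and E :: "nat \<Rightarrow> 'v::finite \<Rightarrow> 'v \<Rightarrow> bool"
    and f :: "nat \<Rightarrow> 'v \<Rightarrow> ('v \<Rightarrow> bool) \<Rightarrow> bool"
    and \<psi> :: "'v \<Rightarrow> bool list \<Rightarrow> bool"
  assumes "is_msyds k E f"
  shows "\<exists>(G :: 'v \<Rightarrow> 'v \<Rightarrow> bool) (g :: 'v \<Rightarrow> ('v \<Rightarrow> bool) \<Rightarrow> bool).
           is_syds G g \<and> phase_space (syds_step g) = phase_space (msyds_step k f \<psi>)"
proof (intro exI conjI)
  show "is_syds (union_graph k E) (\<lambda>v C. msyds_step k f \<psi> C v)"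
    using assms by (rule is_syds_union_graph_msyds_step)
  show "phase_space (syds_step (\<lambda>v C. msyds_step k f \<psi> C v))
      = phase_space (msyds_step k f \<psi>)"
    by (simp only: syds_step_of_step)
qed

end
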